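(* Let $\alpha,\beta,\gamma\in\mathrm{ord}$. If $\alpha<\gamma$ and $\beta<\gamma$, then $\sup(\alpha,\beta)<\gamma$.
   Context: Work constructively. Let $\mathfrak F$ be a set of index sets containing $\mathbb N$ and each $\mathbb N_k=\{n\in\mathbb N:n<k\}$ ($k\ge0$), closed (up to isomorphism) under finitely enumerated subsets, sets of finitely enumerated subsets, and disjoint unions indexed by elements of $\mathfrak F$. A finitely enumerated subset of $A$ is one given by a map $\mathbb N_k\to A$; write $F\subseteq_f I$. The set $\mathrm{ord}$ is inductively generated by $\underline 0$ and, for every family $(\alpha_i)_{i\in I}$ with $I\in\mathfrak F$, $\alpha_i\in\mathrm{ord}$, an element $\mathrm S(\alpha_i)_{i\in I}$; elements of the second kind form $\mathrm{ord}^*$; for such $\alpha$, $I_\alpha=I$ and $\alpha_i$ are its definitional subordinals; $I_{\underline 0}=\emptyset$. For a finite list $F$ in $I_\alpha$, $\alpha_F$ is the list of the $\alpha_i$, $i\in F$. Supremum: for a family $(\alpha^j)_{j\in J}$ in $\mathrm{ord}^*$, $J\in\mathfrak F$, $\sup(\alpha^j)_{j\in J}=\mathrm S(\varepsilon_k)_{k\in K}$ with $K$ the disjoint union of the $I_{\alpha^j}$ (injections $\iota_j$) and $\varepsilon_{\iota_j(i)}=(\alpha^j)_i$; for a finite family in $\mathrm{ord}$, $\sup(\alpha^1,\dots,\alpha^r)$ is $\underline0$ if all are $\underline0$, else the sup of those in $\mathrm{ord}^*$. Relations between an element and a nonempty finite list, by simultaneous induction: $\alpha\le\beta^1,\dots,\beta^m$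 means $\alpha_i<\beta^1,\dots,\beta^m$ for all $i\in I_\alpha$; $\alpha<\beta^1,\dots,\beta^m$ means there exist $F_1\subseteq_f I_{\beta^1},\dots,F_m\subseteq_f I_{\beta^m}$, not all empty, with $\alpha\le\beta^1_{F_1},\dots,\beta^m_{F_m}$ (concatenated list); $\alpha<\gamma$ is the case $m=1$. *)

theory Defs
  imports Main
begin

text \<open>Ordinal notation trees. Index sets are subsets of a universe type 'i;
  the family (alpha_i) for i in I is a function on 'i whose values outside I are irrelevant.\<close>

datatype 'i ord = OZero | OS "'i set" "'i \<Rightarrow> 'i ord"

fun idx :: "'i ord \<Rightarrow> 'i set" where
  "idx OZero = {}"
| "idx (OS I f) = I"

fun sub :: "'i ord \<Rightarrow> 'i \<Rightarrow> 'i ord" where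
  "sub OZero i = OZero"
| "sub (OS I f) i = f i"

primrec ordF :: "'i set set \<Rightarrow> 'i ord \<Rightarrow> bool" where
  "ordF F OZero = True"
| "ordF F (OS I f) = (I \<in> F \<and> (\<forall>i\<in>I. ordF F (f i)))"

text \<open>Fs selects finitely enumerated subsets F_1..F_m of I_{beta^1}..I_{beta^m}, not all empty.\<close>
definition sels :: "'i ord list \<Rightarrow> 'i list list \<Rightarrow> bool" where
  "sels bs Fs \<longleftrightarrow> length Fs = length bs \<and> (\<forall>j<length bs. set (Fs ! j) \<subseteq> idx (bs ! j))
     \<and> (\<exists>j<length bs. Fs ! j \<noteq> [])"

definition subl :: "'i ord list \<Rightarrow> 'i list list \<Rightarrow> 'i ord list" where
  "subl bs Fs = concat (map2 (\<lambda>b F. map (sub b) F) bs Fs)"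

text \<open>alpha \<le> beta^1..beta^m  iff  alpha_i < beta^1..beta^m for all i, where
  alpha < bs iff exists a selection Fs with alpha \<le> subl bs Fs (unfolded inline).\<close>
primrec ord_le :: "'i ord \<Rightarrow> 'i ord list \<Rightarrow> bool" where
  "ord_le OZero bs = True"
| "ord_le (OS I f) bs = (\<forall>i\<in>I. \<exists>Fs. sels bs Fs \<and> ord_le (f i) (subl bs Fs))"

definition ord_lt :: "'i ord \<Rightarrow> 'i ord list \<Rightarrow> bool" where
  "ord_lt a bs \<longleftrightarrow> (\<exists>Fs. sels bs Fs \<and> ord_le a (subl bs Fs))"

definition ord_less :: "'i ord \<Rightarrow> 'i ord \<Rightarrow> bool" where
  "ord_less a c \<longleftrightarrow> ord_lt a [c]"

lemma ord_le_OS_lt: "ord_le (OS I f) bs \<longleftrightarrow> (\<forall>i\<in>I. ord_lt (f i) bs)"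
  by (simp add: ord_lt_def)

text \<open>Binary supremum; the disjoint union I_alpha \<squnion> I_beta is realised via injections
  inl, inr with disjoint ranges. Since I_0 is empty, this covers the cases where one is 0.\<close>
definition ord_sup2 :: "('i \<Rightarrow> 'i) \<Rightarrow> ('i \<Rightarrow> 'i) \<Rightarrow> 'i ord \<Rightarrow> 'i ord \<Rightarrow> 'i ord" where
  "ord_sup2 inl inr a b =
    (if a = OZero \<and> b = OZero then OZero
     else OS (inl ` idx a \<union> inr ` idx b)
             (\<lambda>k. if k \<in> inl ` idx a then sub a (inv inl k) else sub b (inv inr k)))"

end

theory Submission
  imports Defs
begin

text \<open>If \<open>\<alpha> \<le> \<gamma>_G\<close> and \<open>\<beta> \<le> \<gamma>_H\<close> for nonempty selections \<open>G, H\<close>, then both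
  hold with the merged selection \<open>G @ H\<close>, because \<open>\<le>\<close> against a list depends only on the
  set of its entries and grows with it. Every subordinal of \<open>sup(\<alpha>, \<beta>)\<close> is one of \<alpha> or
  of \<beta>, hence below \<open>\<gamma>_(G @ H)\<close>, so \<open>sup(\<alpha>, \<beta>) \<le> \<gamma>_(G @ H)\<close>, i.e. \<open>sup(\<alpha>, \<beta>) < \<gamma>\<close>.
  The same works against any list \<open>\<beta>\<^sup>1, \<dots>, \<beta>\<^sup>m\<close> in place of \<gamma>.\<close>

lemma set_subl:
  "length Fs = length bs \<Longrightarrow>
   set (subl bs Fs) = (\<Union>j<length bs. sub (bs ! j) ` set (Fs ! j))"
  unfolding subl_def by (auto simp: set_zip)

lemma sels_lift:
  assumes sel: "sels xs Fs" and xs_ys: "set xs \<subseteq> set ys"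
  shows "\<exists>Gs. sels ys Gs \<and> set (subl xs Fs) \<subseteq> set (subl ys Gs)"
proof -
  define Gs where "Gs = map (\<lambda>y. concat [Fs ! j. j \<leftarrow> [0..<length xs], xs ! j = y]) ys"
  have len: "length Fs = length xs" "length Gs = length ys"
    using sel by (auto simp: sels_def Gs_def)
  have set_Gs: "set (Gs ! k) = (\<Union>j\<in>{j. j < length xs \<and> xs ! j = ys ! k}. set (Fs ! j))"
    if "k < length ys" for k
    using that by (auto simp: Gs_def)
  have covered: "\<exists>k<length ys. ys ! k = xs ! j \<and> set (Fs ! j) \<subseteq> set (Gs ! k)"
    if "j < length xs" for j
  proof -
    obtain k where "k < length ys" "ys ! k = xs ! j"
      using \<open>j < length xs\<close> xs_ys by (metis in_set_conv_nth nth_mem subset_iff)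
    moreover have "set (Fs ! j) \<subseteq> set (Gs ! k)"
      using \<open>j < length xs\<close> calculation by (auto simp: set_Gs)
    ultimately show ?thesis by blast
  qed
  have "sels ys Gs"
  proof -
    have "set (Gs ! k) \<subseteq> idx (ys ! k)" if "k < length ys" for k
      using sel that by (fastforce simp: sels_def set_Gs)
    moreover obtain j where "j < length xs" "Fs ! j \<noteq> []"
      using sel by (auto simp: sels_def)
    ultimately show ?thesis
      using covered len(2) unfolding sels_def by fastforce
  qed
  moreover have "set (subl xs Fs) \<subseteq> set (subl ys Gs)"
    unfolding set_subl[OF len(1)] set_subl[OF len(2)] using covered by fastforce
  ultimately show ?thesis by blast
qed

lemma ord_le_mono_set: "ord_le a xs \<Longrightarrow> set xs \<subseteq> set ys \<Longrightarrow> ord_le a ys"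
proof (induction a arbitrary: xs ys)
  case OZero
  then show ?case by simp
next
  case (OS I f)
  show ?case
  proof (simp, intro ballI)
    fix i assume "i \<in> I"
    then obtain Fs where Fs: "sels xs Fs" "ord_le (f i) (subl xs Fs)"
      using OS.prems(1) by auto
    obtain Gs where "sels ys Gs" "set (subl xs Fs) \<subseteq> set (subl ys Gs)"
      using sels_lift[OF Fs(1) OS.prems(2)] by blast
    with Fs(2) OS.IH show "\<exists>Gs. sels ys Gs \<and> ord_le (f i) (subl ys Gs)"
      by blast
  qed
qed

lemma sels_merge:
  assumes "sels bs Fs" "sels bs Gs"
  shows "sels bs (map2 (@) Fs Gs)"
    and "set (subl bs Fs) \<union> set (subl bs Gs) \<subseteq> set (subl bs (map2 (@) Fs Gs))"
proof -
  have len: "length Fs = length bs" "length Gs = length bs"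
    using assms by (auto simp: sels_def)
  then show "sels bs (map2 (@) Fs Gs)"
    using assms by (fastforce simp: sels_def)
  show "set (subl bs Fs) \<union> set (subl bs Gs) \<subseteq> set (subl bs (map2 (@) Fs Gs))"
    using len by (auto simp: set_subl)
qed

lemma ord_le_imp_sub_lt: "ord_le a bs \<Longrightarrow> i \<in> idx a \<Longrightarrow> ord_lt (sub a i) bs"
  by (cases a) (auto simp: ord_lt_def)

lemma ord_le_sup2:
  assumes "inj inl" "inj inr" "ord_le a bs" "ord_le b bs"
  shows "ord_le (ord_sup2 inl inr a b) bs"
proof (cases "a = OZero \<and> b = OZero")
  case True
  then show ?thesis by (simp add: ord_sup2_def)
next
  case False
  show ?thesis
    using False ord_le_imp_sub_lt[OF assms(3)] ord_le_imp_sub_lt[OF assms(4)]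
    by (auto simp: ord_sup2_def ord_le_OS_lt inv_f_f[OF assms(1)] inv_f_f[OF assms(2)]
        simp del: ord_le.simps)
qed

lemma ord_lt_sup2:
  assumes "inj inl" "inj inr" "ord_lt a bs" "ord_lt b bs"
  shows "ord_lt (ord_sup2 inl inr a b) bs"
proof -
  obtain Fs Gs where Fs: "sels bs Fs" "ord_le a (subl bs Fs)"
    and Gs: "sels bs Gs" "ord_le b (subl bs Gs)"
    using assms(3,4) unfolding ord_lt_def by blast
  let ?Hs = "map2 (@) Fs Gs"
  have "ord_le a (subl bs ?Hs)" "ord_le b (subl bs ?Hs)"
    using Fs(2) Gs(2) sels_merge(2)[OF Fs(1) Gs(1)] by (auto intro: ord_le_mono_set)
  then have "ord_le (ord_sup2 inl inr a b) (subl bs ?Hs)"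
    by (rule ord_le_sup2[OF assms(1,2)])
  with sels_merge(1)[OF Fs(1) Gs(1)] show ?thesis
    unfolding ord_lt_def by blast
qed

theorem lemma4p4:
  fixes inl inr :: "'i \<Rightarrow> 'i" and F :: "'i set set" and \<alpha> \<beta> \<gamma> :: "'i ord"
  assumes "inj inl" and "inj inr" and "range inl \<inter> range inr = {}"
    and "ordF F \<alpha>" and "ordF F \<beta>" and "ordF F \<gamma>"
    and "ord_less \<alpha> \<gamma>" and "ord_less \<beta> \<gamma>"
  shows "ord_less (ord_sup2 inl inr \<alpha> \<beta>) \<gamma>"
  using assms(1,2,7,8) unfolding ord_less_def by (rule ord_lt_sup2)

end
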